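(* Let $\rho\in(0,1)$, $\gamma>0$, $T>0$, and let $0<\lambda_1\le\lambda_2\le\cdots$ be positive numbers. Then for all $t\in[0,T]$ and $k\ge1$, $$A_{\rho}(\lambda_k,t)\ge C(\rho,\gamma,\lambda_1)>0,\qquad C(\rho,\gamma,\lambda_1)=\frac{\gamma\sin\rho\pi}{3\pi}\int_0^{\infty}\frac{r^{\rho-1}e^{-rT}}{\frac{r^2}{\lambda_1^2}+\gamma^2r^{2\rho}+1}dr,$$ where $A_{\rho}(\lambda,t)=\frac{\gamma}{\pi}\int_0^{\infty}e^{-rt}\frac{\lambda^2r^{\rho-1}\sin\rho\pi}{(-r+\lambda\gamma r^{\rho}\cos\rho\pi+\lambda)^2+(\lambda\gamma r^{\rho}\sin\rho\pi)^2}dr$.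
   Context: In the paper the $\lambda_k$ are the eigenvalues, arranged non-decreasingly, of a positive self-adjoint operator with compact resolvent on a separable Hilbert space. *)

theory Defs
  imports "HOL-Analysis.Analysis"
begin

definition A_rho :: "real \<Rightarrow> real \<Rightarrow> real \<Rightarrow> real \<Rightarrow> real" where
  "A_rho \<rho> \<gamma> lam t =
     \<gamma> / pi * (LBINT r:{0<..}. exp (- r * t) *
        (lam\<^sup>2 * r powr (\<rho> - 1) * sin (\<rho> * pi)) /
        ((- r + lam * \<gamma> * r powr \<rho> * cos (\<rho> * pi) + lam)\<^sup>2
          + (lam * \<gamma> * r powr \<rho> * sin (\<rho> * pi))\<^sup>2))"

definition C_const :: "real \<Rightarrow> real \<Rightarrow> real \<Rightarrow> real \<Rightarrow> real" where
  "C_const \<rho> \<gamma> lam1 T =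
     \<gamma> * sin (\<rho> * pi) / (3 * pi) *
     (LBINT r:{0<..}. r powr (\<rho> - 1) * exp (- r * T) /
        (r\<^sup>2 / lam1\<^sup>2 + \<gamma>\<^sup>2 * r powr (2 * \<rho>) + 1))"

end

(* The denominator of A_rho is |lam - r + lam gamma r^rho e^(i rho pi)|^2. By
   (x + y + z)^2 <= 3 (x^2 + y^2 + z^2) and lam >= lam_1 it is at most
   3 lam^2 (r^2/lam_1^2 + gamma^2 r^(2 rho) + 1), and exp(-r t) >= exp(-r T) for t <= T, so the
   integrand of A_rho dominates sin(rho pi)/3 times the integrand of C pointwise. Both integrands are
   integrable, being bounded by multiples of r^(rho-1)/(L + r^2); for A_rho this uses that the
   denominator is at least a multiple of lam^2 + r^2, which holds because |cos(rho pi)| < 1. *)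

theory Submission
  imports Defs
begin

lemma set_integrable_lborel_if_nonneg_integrable_on:
  fixes f :: "'a::euclidean_space \<Rightarrow> real"
  assumes "f integrable_on S" "\<And>x. x \<in> S \<Longrightarrow> 0 \<le> f x"
    and [measurable]: "S \<in> sets borel" "f \<in> borel_measurable borel"
  shows "set_integrable lborel S f"
proof -
  have "f absolutely_integrable_on S"
    using assms(1,2) by (simp add: absolutely_integrable_on_iff_nonneg)
  then show ?thesis
    unfolding set_integrable_def by (subst (asm) integrable_completion) measurable
qed

lemma set_integrable_powr_div_add_sq:
  fixes \<rho> L :: real
  assumes "0 < \<rho>" "\<rho> < 2" "0 < L"
  shows "set_integrable lborel {0<..} (\<lambda>r. r powr (\<rho> - 1) / (L + r\<^sup>2))"
proof -
  have L_add_sq: "0 < L + r\<^sup>2" for r :: real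
    using assms by (simp add: add_pos_nonneg)
  have near_zero: "set_integrable lborel {0<..1} (\<lambda>r. r powr (\<rho> - 1) / (L + r\<^sup>2))"
  proof (rule set_integrable_bound)
    have "(\<lambda>r. r powr (\<rho> - 1)) integrable_on {0<..1}"
      by (rule integrable_on_powr_from_0') (use assms in auto)
    then have "set_integrable lborel {0<..1} (\<lambda>r. r powr (\<rho> - 1))"
      by (rule set_integrable_lborel_if_nonneg_integrable_on) auto
    then show "set_integrable lborel {0<..1} (\<lambda>r. r powr (\<rho> - 1) / L)"
      by simp
    show "AE r in lborel. r \<in> {0<..1} \<longrightarrow>
        norm (r powr (\<rho> - 1) / (L + r\<^sup>2)) \<le> norm (r powr (\<rho> - 1) / L)"
      using assms L_add_sq by (auto intro!: AE_I2 divide_left_mono)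
  qed (simp add: set_borel_measurable_def)
  have near_infinity: "set_integrable lborel {1..} (\<lambda>r. r powr (\<rho> - 1) / (L + r\<^sup>2))"
  proof (rule set_integrable_bound)
    have "(\<lambda>r. r powr (\<rho> - 3)) integrable_on {1..}"
      using has_integral_powr_to_inf[of "\<rho> - 3" 1] assms by (auto simp: integrable_on_def)
    then show "set_integrable lborel {1..} (\<lambda>r. r powr (\<rho> - 3))"
      by (rule set_integrable_lborel_if_nonneg_integrable_on) auto
    show "AE r in lborel. r \<in> {1..} \<longrightarrow>
        norm (r powr (\<rho> - 1) / (L + r\<^sup>2)) \<le> norm (r powr (\<rho> - 3))"
    proof (intro AE_I2 impI)
      fix r :: real
      assume "r \<in> {1..}"
      then have r: "1 \<le> r" by simp
      have "r powr (\<rho> - 1) = r powr (\<rho> - 3) * r powr 2"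
        by (simp flip: powr_add)
      also have "r powr 2 = r\<^sup>2"
        using r by (simp add: powr_numeral)
      finally have "r powr (\<rho> - 1) = r powr (\<rho> - 3) * r\<^sup>2" .
      then show "norm (r powr (\<rho> - 1) / (L + r\<^sup>2)) \<le> norm (r powr (\<rho> - 3))"
        using r assms L_add_sq[of r] by (simp add: divide_le_eq mult_left_mono)
    qed
  qed (simp add: set_borel_measurable_def)
  have "set_integrable lborel ({0<..1} \<union> {1..}) (\<lambda>r. r powr (\<rho> - 1) / (L + r\<^sup>2))"
    using near_zero near_infinity by (rule set_integrable_Un) auto
  also have "{0<..1} \<union> {1..} = {0::real<..}"
    by auto
  finally show ?thesis .
qed

lemma set_integrable_Ioi_of_powr_bound:
  fixes f :: "real \<Rightarrow> real"
  assumes "0 < \<rho>" "\<rho> < 2" "0 < L" "f \<in> borel_measurable borel"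
    and "\<And>r. 0 < r \<Longrightarrow> \<bar>f r\<bar> \<le> K * (r powr (\<rho> - 1) / (L + r\<^sup>2))"
  shows "set_integrable lborel {0<..} f"
proof (rule set_integrable_bound)
  show "set_integrable lborel {0<..} (\<lambda>r. K * (r powr (\<rho> - 1) / (L + r\<^sup>2)))"
    by (rule set_integrable_mult_right) (rule set_integrable_powr_div_add_sq[OF assms(1-3)])
  show "set_borel_measurable lborel {0<..} f"
    using assms(4) by (simp add: set_borel_measurable_def)
  show "AE r in lborel. r \<in> {0<..} \<longrightarrow> norm (f r) \<le> norm (K * (r powr (\<rho> - 1) / (L + r\<^sup>2)))"
  proof (intro AE_I2 impI)
    fix r :: real assume "r \<in> {0<..}"
    then show "norm (f r) \<le> norm (K * (r powr (\<rho> - 1) / (L + r\<^sup>2)))"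
      using assms(5)[of r] abs_ge_self order_trans by (simp only: real_norm_def) blast
  qed
qed

lemma set_integral_pos:
  fixes f :: "'a \<Rightarrow> real"
  assumes "set_integrable M A f" "A \<in> sets M" "A \<notin> null_sets M"
    and "\<And>x. x \<in> A \<Longrightarrow> 0 < f x"
  shows "0 < (\<integral>x\<in>A. f x \<partial>M)"
proof -
  have integrable: "integrable M (\<lambda>x. indicator A x * f x)"
    using assms(1) by (simp add: set_integrable_def)
  have "0 \<le> (\<integral>x\<in>A. f x \<partial>M)"
    unfolding set_lebesgue_integral_def
    using assms(4) by (intro integral_nonneg_AE) (auto simp: indicator_def less_imp_le)
  moreover have "(\<integral>x\<in>A. f x \<partial>M) \<noteq> 0"
  proof
    assume "(\<integral>x\<in>A. f x \<partial>M) = 0"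
    moreover have "(\<integral>x\<in>A. indicator A x * f x \<partial>M) = (\<integral>x\<in>A. f x \<partial>M)"
      unfolding set_lebesgue_integral_def
      by (rule Bochner_Integration.integral_cong) (auto simp: indicator_def)
    ultimately have "(\<integral>x\<in>A. indicator A x * f x \<partial>M) = 0" by simp
    then have "A \<in> null_sets M"
      using null_if_pos_func_has_zero_int[OF integrable assms(2)] assms(4) by auto
    with assms(3) show False ..
  qed
  ultimately show ?thesis by simp
qed

lemma greaterThan_notin_null_sets_lborel: "{a::real<..} \<notin> null_sets lborel"
proof
  assume "{a<..} \<in> null_sets lborel"
  then have "{a<..a + 1} \<in> null_sets lborel"
    by (rule null_sets_subset) auto
  then show False
    by (simp add: null_sets_def)
qed

lemma sum_sq_rotation_ge:
  fixes x a c s :: real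
  assumes "c\<^sup>2 + s\<^sup>2 = 1"
  shows "(1 - \<bar>c\<bar>) * (x\<^sup>2 + a\<^sup>2) \<le> (x + a * c)\<^sup>2 + (a * s)\<^sup>2"
proof -
  have "(x + a * c)\<^sup>2 + (a * s)\<^sup>2 = x\<^sup>2 + 2 * x * a * c + a\<^sup>2 * (c\<^sup>2 + s\<^sup>2)"
    by (simp add: power2_eq_square algebra_simps)
  also have "\<dots> = x\<^sup>2 + 2 * x * a * c + a\<^sup>2"
    using assms by simp
  finally have expand: "(x + a * c)\<^sup>2 + (a * s)\<^sup>2 = x\<^sup>2 + 2 * x * a * c + a\<^sup>2" .
  have "\<bar>2 * x * a\<bar> \<le> x\<^sup>2 + a\<^sup>2"
    using sum_squares_bound[of "\<bar>x\<bar>" "\<bar>a\<bar>"] by (simp add: abs_mult)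
  then have "\<bar>2 * x * a * c\<bar> \<le> \<bar>c\<bar> * (x\<^sup>2 + a\<^sup>2)"
    by (simp add: abs_mult mult_left_mono mult.commute)
  then show ?thesis
    unfolding expand by (simp add: algebra_simps abs_le_iff)
qed

lemma exists_sq_diff_add_sq_powr_ge:
  fixes l g \<rho> :: real
  assumes "0 < l" "0 < g" "0 < \<rho>"
  shows "\<exists>\<epsilon>>0. \<forall>r>0. \<epsilon> * (l\<^sup>2 + r\<^sup>2) \<le> (l - r)\<^sup>2 + (g * r powr \<rho>)\<^sup>2"
proof (intro exI conjI allI impI)
  define m where "m = (g * (l / 2) powr \<rho>)\<^sup>2"
  have m: "0 < m"
    unfolding m_def using assms by simp
  show "0 < min (1/5) (m / (5 * l\<^sup>2))"
    using m assms by simp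
  fix r :: real
  assume r: "0 < r"
  show "min (1/5) (m / (5 * l\<^sup>2)) * (l\<^sup>2 + r\<^sup>2) \<le> (l - r)\<^sup>2 + (g * r powr \<rho>)\<^sup>2"
  proof (cases "l / 2 < r \<and> r < 2 * l")
    case True
    have "r\<^sup>2 \<le> (2 * l)\<^sup>2"
      using True r by (intro power_mono) auto
    then have "m / (5 * l\<^sup>2) * (l\<^sup>2 + r\<^sup>2) \<le> m / (5 * l\<^sup>2) * (5 * l\<^sup>2)"
      using m by (intro mult_left_mono) auto
    also have "\<dots> = m"
      using assms by simp
    also have "m \<le> (g * r powr \<rho>)\<^sup>2"
      unfolding m_def using True assms
      by (intro power_mono mult_left_mono powr_mono2) auto
    finally have "m / (5 * l\<^sup>2) * (l\<^sup>2 + r\<^sup>2) \<le> (g * r powr \<rho>)\<^sup>2" .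
    moreover have "min (1/5) (m / (5 * l\<^sup>2)) * (l\<^sup>2 + r\<^sup>2) \<le> m / (5 * l\<^sup>2) * (l\<^sup>2 + r\<^sup>2)"
      by (intro mult_right_mono) auto
    ultimately show ?thesis
      using zero_le_power2[of "l - r"] by linarith
  next
    case False
    \<comment> \<open>\<open>5 (l - r)\<^sup>2 - (l\<^sup>2 + r\<^sup>2) = 2 (2 l - r) (l - 2 r)\<close>, a product of two factors of equal sign here\<close>
    have "0 \<le> (2 * l - r) * (l - 2 * r)"
      using False assms r by (cases "r \<le> l / 2") (auto intro: mult_nonneg_nonneg mult_nonpos_nonpos)
    then have "(l\<^sup>2 + r\<^sup>2) / 5 \<le> (l - r)\<^sup>2"
      by (simp add: power2_eq_square field_simps)
    moreover have "min (1/5) (m / (5 * l\<^sup>2)) * (l\<^sup>2 + r\<^sup>2) \<le> 1/5 * (l\<^sup>2 + r\<^sup>2)"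
      by (intro mult_right_mono) auto
    ultimately show ?thesis
      using zero_le_power2[of "g * r powr \<rho>"] by linarith
  qed
qed

definition A_denom :: "real \<Rightarrow> real \<Rightarrow> real \<Rightarrow> real \<Rightarrow> real" where
  "A_denom \<rho> \<gamma> lam r =
     (- r + lam * \<gamma> * r powr \<rho> * cos (\<rho> * pi) + lam)\<^sup>2 + (lam * \<gamma> * r powr \<rho> * sin (\<rho> * pi))\<^sup>2"

definition A_kernel :: "real \<Rightarrow> real \<Rightarrow> real \<Rightarrow> real \<Rightarrow> real \<Rightarrow> real" where
  "A_kernel \<rho> \<gamma> lam t r =
     exp (- r * t) * (lam\<^sup>2 * r powr (\<rho> - 1) * sin (\<rho> * pi)) / A_denom \<rho> \<gamma> lam r"

definition C_kernel :: "real \<Rightarrow> real \<Rightarrow> real \<Rightarrow> real \<Rightarrow> real \<Rightarrow> real" where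
  "C_kernel \<rho> \<gamma> lam1 T r =
     r powr (\<rho> - 1) * exp (- r * T) / (r\<^sup>2 / lam1\<^sup>2 + \<gamma>\<^sup>2 * r powr (2 * \<rho>) + 1)"

lemma A_rho_eq_integral_A_kernel:
  "A_rho \<rho> \<gamma> lam t = \<gamma> / pi * (LBINT r:{0<..}. A_kernel \<rho> \<gamma> lam t r)"
  by (simp add: A_rho_def A_kernel_def A_denom_def)

lemma C_const_eq_integral_C_kernel:
  "C_const \<rho> \<gamma> lam1 T = \<gamma> / pi * (sin (\<rho> * pi) / 3 * (LBINT r:{0<..}. C_kernel \<rho> \<gamma> lam1 T r))"
  by (simp add: C_const_def C_kernel_def)

lemma A_denom_pos:
  assumes "0 < \<rho>" "\<rho> < 1" "0 < \<gamma>" "0 < lam" "0 < r"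
  shows "0 < A_denom \<rho> \<gamma> lam r"
proof -
  have "0 < sin (\<rho> * pi)"
    using assms by (intro sin_gt_zero) auto
  then have "0 < (lam * \<gamma> * r powr \<rho> * sin (\<rho> * pi))\<^sup>2"
    using assms by simp
  then show ?thesis
    unfolding A_denom_def by (simp add: add_nonneg_pos)
qed

lemma A_denom_ge:
  assumes "0 < \<rho>" "\<rho> < 1" "0 < \<gamma>" "0 < lam"
  shows "\<exists>\<kappa>>0. \<forall>r>0. \<kappa> * (lam\<^sup>2 + r\<^sup>2) \<le> A_denom \<rho> \<gamma> lam r"
proof -
  obtain \<epsilon> where \<epsilon>: "0 < \<epsilon>"
    and \<epsilon>_le: "\<And>r. 0 < r \<Longrightarrow> \<epsilon> * (lam\<^sup>2 + r\<^sup>2) \<le> (lam - r)\<^sup>2 + (lam * \<gamma> * r powr \<rho>)\<^sup>2"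
    using exists_sq_diff_add_sq_powr_ge[of lam "lam * \<gamma>" \<rho>] assms by auto
  have pythagoras: "(cos (\<rho> * pi))\<^sup>2 + (sin (\<rho> * pi))\<^sup>2 = 1"
    by (simp add: add.commute)
  have "0 < sin (\<rho> * pi)"
    using assms by (intro sin_gt_zero) auto
  then have "(cos (\<rho> * pi))\<^sup>2 < 1"
    using pythagoras zero_less_power2[of "sin (\<rho> * pi)"] by linarith
  then have "\<bar>cos (\<rho> * pi)\<bar> < 1"
    by (simp add: abs_square_less_1)
  show ?thesis
  proof (intro exI conjI allI impI)
    show "0 < (1 - \<bar>cos (\<rho> * pi)\<bar>) * \<epsilon>"
      using \<open>\<bar>cos (\<rho> * pi)\<bar> < 1\<close> \<epsilon> by simp
    fix r :: real
    assume "0 < r"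
    have "(1 - \<bar>cos (\<rho> * pi)\<bar>) * \<epsilon> * (lam\<^sup>2 + r\<^sup>2)
        = (1 - \<bar>cos (\<rho> * pi)\<bar>) * (\<epsilon> * (lam\<^sup>2 + r\<^sup>2))"
      by (simp only: mult.assoc)
    also have "\<dots> \<le> (1 - \<bar>cos (\<rho> * pi)\<bar>) * ((lam - r)\<^sup>2 + (lam * \<gamma> * r powr \<rho>)\<^sup>2)"
      using \<epsilon>_le[OF \<open>0 < r\<close>] \<open>\<bar>cos (\<rho> * pi)\<bar> < 1\<close>
      by (intro mult_left_mono) auto
    also have "\<dots> \<le> A_denom \<rho> \<gamma> lam r"
    proof -
      have reorder: "- r + lam * \<gamma> * r powr \<rho> * cos (\<rho> * pi) + lam
          = lam - r + lam * \<gamma> * r powr \<rho> * cos (\<rho> * pi)"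
        by simp
      show ?thesis
        unfolding A_denom_def reorder by (rule sum_sq_rotation_ge[OF pythagoras])
    qed
    finally show "(1 - \<bar>cos (\<rho> * pi)\<bar>) * \<epsilon> * (lam\<^sup>2 + r\<^sup>2) \<le> A_denom \<rho> \<gamma> lam r" .
  qed
qed

lemma A_denom_le:
  assumes "0 < lam1" "lam1 \<le> lam"
  shows "A_denom \<rho> \<gamma> lam r \<le> 3 * lam\<^sup>2 * (r\<^sup>2 / lam1\<^sup>2 + \<gamma>\<^sup>2 * r powr (2 * \<rho>) + 1)"
proof -
  define a where "a = lam * \<gamma> * r powr \<rho>"
  define c where "c = cos (\<rho> * pi)"
  define s where "s = sin (\<rho> * pi)"
  have sq_sum: "(- r + a * c + lam)\<^sup>2 \<le> 3 * (r\<^sup>2 + (a * c)\<^sup>2 + lam\<^sup>2)"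
  proof -
    have "0 \<le> (r + a * c)\<^sup>2 + (a * c - lam)\<^sup>2 + (r + lam)\<^sup>2"
      by simp
    then show ?thesis
      by (simp add: power2_eq_square algebra_simps)
  qed
  have "A_denom \<rho> \<gamma> lam r = (- r + a * c + lam)\<^sup>2 + (a * s)\<^sup>2"
    by (simp add: A_denom_def a_def c_def s_def)
  also have "\<dots> \<le> 3 * (r\<^sup>2 + (a * c)\<^sup>2 + lam\<^sup>2) + 3 * (a * s)\<^sup>2"
    using sq_sum zero_le_power2[of "a * s"] by linarith
  also have "\<dots> = 3 * (r\<^sup>2 + a\<^sup>2 * (c\<^sup>2 + s\<^sup>2) + lam\<^sup>2)"
    by (simp add: power_mult_distrib algebra_simps)
  also have "\<dots> = 3 * (r\<^sup>2 + a\<^sup>2 + lam\<^sup>2)"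
    by (simp add: c_def s_def)
  also have "\<dots> \<le> 3 * lam\<^sup>2 * (r\<^sup>2 / lam1\<^sup>2 + \<gamma>\<^sup>2 * r powr (2 * \<rho>) + 1)"
  proof -
    have "r\<^sup>2 \<le> lam\<^sup>2 * (r\<^sup>2 / lam1\<^sup>2)"
      using assms power_mono[of lam1 lam 2] by (simp add: field_simps mult_right_mono)
    moreover have "a\<^sup>2 = lam\<^sup>2 * (\<gamma>\<^sup>2 * r powr (2 * \<rho>))"
      by (simp add: a_def power_mult_distrib power2_eq_square flip: powr_add)
    ultimately show ?thesis
      by (simp add: algebra_simps)
  qed
  finally show ?thesis .
qed

lemma A_kernel_integrable:
  assumes "0 < \<rho>" "\<rho> < 1" "0 < \<gamma>" "0 < lam" "0 \<le> t"
  shows "set_integrable lborel {0<..} (A_kernel \<rho> \<gamma> lam t)"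
proof -
  obtain \<kappa> where \<kappa>: "0 < \<kappa>"
    and denom_ge: "\<And>r. 0 < r \<Longrightarrow> \<kappa> * (lam\<^sup>2 + r\<^sup>2) \<le> A_denom \<rho> \<gamma> lam r"
    using A_denom_ge[OF assms(1-4)] by auto
  have sin_pos: "0 < sin (\<rho> * pi)"
    using assms by (intro sin_gt_zero) auto
  show ?thesis
  proof (rule set_integrable_Ioi_of_powr_bound[of \<rho> "lam\<^sup>2"])
    show "A_kernel \<rho> \<gamma> lam t \<in> borel_measurable borel"
      unfolding A_kernel_def A_denom_def by measurable
    fix r :: real
    assume r: "0 < r"
    have "\<bar>A_kernel \<rho> \<gamma> lam t r\<bar>
        = exp (- r * t) * (lam\<^sup>2 * r powr (\<rho> - 1) * sin (\<rho> * pi)) / A_denom \<rho> \<gamma> lam r"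
      using A_denom_pos[OF assms(1-4) r] sin_pos by (simp add: A_kernel_def)
    also have "\<dots> \<le> lam\<^sup>2 * r powr (\<rho> - 1) * sin (\<rho> * pi) / (\<kappa> * (lam\<^sup>2 + r\<^sup>2))"
      using r assms sin_pos \<kappa> denom_ge[OF r]
      by (intro frac_le mult_left_le_one_le mult_pos_pos) (auto simp: add_pos_nonneg)
    also have "\<dots> = lam\<^sup>2 * sin (\<rho> * pi) / \<kappa> * (r powr (\<rho> - 1) / (lam\<^sup>2 + r\<^sup>2))"
      by simp
    finally show "\<bar>A_kernel \<rho> \<gamma> lam t r\<bar>
        \<le> lam\<^sup>2 * sin (\<rho> * pi) / \<kappa> * (r powr (\<rho> - 1) / (lam\<^sup>2 + r\<^sup>2))" .
  qed (use assms in auto)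
qed

lemma C_kernel_pos:
  assumes "0 < r"
  shows "0 < C_kernel \<rho> \<gamma> lam1 T r"
  using assms by (simp add: C_kernel_def add_nonneg_pos)

lemma C_kernel_integrable:
  assumes "0 < \<rho>" "\<rho> < 2" "0 < lam1" "0 \<le> T"
  shows "set_integrable lborel {0<..} (C_kernel \<rho> \<gamma> lam1 T)"
proof (rule set_integrable_Ioi_of_powr_bound[of \<rho> "lam1\<^sup>2"])
  show "C_kernel \<rho> \<gamma> lam1 T \<in> borel_measurable borel"
    unfolding C_kernel_def by measurable
  fix r :: real
  assume r: "0 < r"
  have "\<bar>C_kernel \<rho> \<gamma> lam1 T r\<bar>
      = r powr (\<rho> - 1) * exp (- r * T) / (r\<^sup>2 / lam1\<^sup>2 + \<gamma>\<^sup>2 * r powr (2 * \<rho>) + 1)"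
    using C_kernel_pos[OF r] by (simp add: C_kernel_def)
  also have "\<dots> \<le> r powr (\<rho> - 1) / (r\<^sup>2 / lam1\<^sup>2 + 1)"
    using r assms by (intro frac_le mult_right_le_one_le) (auto simp: add_nonneg_pos)
  also have "\<dots> = lam1\<^sup>2 * (r powr (\<rho> - 1) / (lam1\<^sup>2 + r\<^sup>2))"
    using assms by (simp add: field_simps)
  finally show "\<bar>C_kernel \<rho> \<gamma> lam1 T r\<bar> \<le> lam1\<^sup>2 * (r powr (\<rho> - 1) / (lam1\<^sup>2 + r\<^sup>2))" .
qed (use assms in auto)

lemma C_kernel_le_A_kernel:
  assumes "0 < \<rho>" "\<rho> < 1" "0 < \<gamma>" "0 < lam1" "lam1 \<le> lam" "t \<le> T" "0 < r"
  shows "sin (\<rho> * pi) / 3 * C_kernel \<rho> \<gamma> lam1 T r \<le> A_kernel \<rho> \<gamma> lam t r"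
proof -
  define N where "N = lam\<^sup>2 * r powr (\<rho> - 1) * sin (\<rho> * pi)"
  define Q where "Q = r\<^sup>2 / lam1\<^sup>2 + \<gamma>\<^sup>2 * r powr (2 * \<rho>) + 1"
  have lam: "0 < lam"
    using assms by simp
  have N: "0 \<le> N"
    unfolding N_def using assms by (simp add: sin_ge_zero)
  have Q: "0 < Q"
    unfolding Q_def by (simp add: add_nonneg_pos)
  have D: "0 < A_denom \<rho> \<gamma> lam r"
    using A_denom_pos[OF assms(1-3) lam assms(7)] .
  have "sin (\<rho> * pi) / 3 * C_kernel \<rho> \<gamma> lam1 T r = exp (- r * T) * N / (3 * lam\<^sup>2 * Q)"
    unfolding C_kernel_def N_def Q_def [symmetric] using lam Q by (simp add: field_simps)
  also have "\<dots> \<le> exp (- r * T) * N / A_denom \<rho> \<gamma> lam r"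
    using A_denom_le[OF assms(4,5), of \<rho> \<gamma> r] D N Q
    by (intro divide_left_mono) (auto simp: Q_def)
  also have "\<dots> \<le> exp (- r * t) * N / A_denom \<rho> \<gamma> lam r"
    using assms N D by (intro divide_right_mono mult_right_mono) auto
  also have "\<dots> = A_kernel \<rho> \<gamma> lam t r"
    unfolding A_kernel_def N_def ..
  finally show ?thesis .
qed

theorem lemma2p4:
  fixes \<rho> \<gamma> T :: real and lam :: "nat \<Rightarrow> real"
  assumes "0 < \<rho>" "\<rho> < 1" "0 < \<gamma>" "0 < T"
    and "0 < lam 1"
    and "\<And>k. k \<ge> 1 \<Longrightarrow> lam k \<le> lam (Suc k)"
  shows "(\<forall>t\<in>{0..T}. \<forall>k\<ge>1. A_rho \<rho> \<gamma> (lam k) t \<ge> C_const \<rho> \<gamma> (lam 1) T)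
         \<and> C_const \<rho> \<gamma> (lam 1) T > 0"
proof -
  have sin_pos: "0 < sin (\<rho> * pi)"
    using assms by (intro sin_gt_zero) auto
  have "0 < (LBINT r:{0<..}. C_kernel \<rho> \<gamma> (lam 1) T r)"
    using assms
    by (intro set_integral_pos C_kernel_integrable C_kernel_pos greaterThan_notin_null_sets_lborel) auto
  then have C_pos: "0 < C_const \<rho> \<gamma> (lam 1) T"
    unfolding C_const_eq_integral_C_kernel using assms sin_pos by simp
  have "C_const \<rho> \<gamma> (lam 1) T \<le> A_rho \<rho> \<gamma> (lam k) t" if t: "t \<in> {0..T}" and k: "k \<ge> 1" for t k
  proof -
    have "lam 1 \<le> lam k"
      by (rule lift_Suc_mono_le_ivl[of "{1..}"]) (use assms(6) k in auto)
    then have "(LBINT r:{0<..}. sin (\<rho> * pi) / 3 * C_kernel \<rho> \<gamma> (lam 1) T r)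
        \<le> (LBINT r:{0<..}. A_kernel \<rho> \<gamma> (lam k) t r)"
      using assms t
      by (intro set_integral_mono set_integrable_mult_right C_kernel_integrable
          A_kernel_integrable C_kernel_le_A_kernel) auto
    then show ?thesis
      unfolding A_rho_eq_integral_A_kernel C_const_eq_integral_C_kernel
      using assms by (intro mult_left_mono) auto
  qed
  with C_pos show ?thesis
    by auto
qed

end
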